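(* Let $\mathcal{E}$ be a metric space and $\lambda,\kappa,\mu\colon\mathcal{E}\to[0,\infty)$ continuous, and let $t\ge0$. Then the map $\phi_t\colon D([0,\infty);\mathcal{E})\to[0,\infty)$, $$\phi_t(f)=\int_0^t\lambda(f(s))\,e^{-\kappa(f(s))\int_s^t\mu(f(r))\,dr}\,ds,$$ is continuous, where $D([0,\infty);\mathcal{E})$ carries the Skorokhod $J_1$ topology.
   Context: $D([0,\infty);\mathcal{E})$ is the space of càdlàg functions $[0,\infty)\to\mathcal{E}$, equipped with the Skorokhod $J_1$ topology (e.g. induced by the metric $d^\circ(f,g)=\inf_{\lambda\in\Lambda}[\gamma(\lambda)\vee\int_0^\infty e^{-u}\sup_{t\ge0}(1\wedge\rho(f(t\wedge u),g(\lambda(t)\wedge u)))\,du]$, where $\Lambda$ is the set of increasing homeomorphisms of $[0,\infty)$, $\gamma(\lambda)=\sup_{t>s\ge0}|\log(\lambda(t)-\lambda(s))-\log(t-s)|$, and $\rho$ the metric on $\mathcal{E}$). *)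

theory Defs
  imports "HOL-Analysis.Analysis"
begin

text \<open>Cadlag functions on [0,\<infinity>) (values at negative times are irrelevant).\<close>
definition cadlag :: "(real \<Rightarrow> 'a::metric_space) \<Rightarrow> bool" where
  "cadlag f \<longleftrightarrow> (\<forall>t\<ge>0. (f \<longlongrightarrow> f t) (at_right t) \<and> (t > 0 \<longrightarrow> (\<exists>l. (f \<longlongrightarrow> l) (at_left t))))"

definition Skorokhod_D :: "(real \<Rightarrow> 'a::metric_space) set" where
  "Skorokhod_D = {f. cadlag f}"

definition Lambda_set :: "(real \<Rightarrow> real) set" where
  "Lambda_set = {l. mono_on {0..} l \<and> (\<exists>l'. homeomorphism {0..} {0..} l l')}"

definition gamma_sk :: "(real \<Rightarrow> real) \<Rightarrow> ereal" where
  "gamma_sk l = (SUP st\<in>{(s,t). 0 \<le> s \<and> s < t}.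
      ereal \<bar>ln (l (snd st) - l (fst st)) - ln (snd st - fst st)\<bar>)"

definition sk_integrand :: "(real \<Rightarrow> 'a::metric_space) \<Rightarrow> (real \<Rightarrow> 'a) \<Rightarrow> (real \<Rightarrow> real) \<Rightarrow> real \<Rightarrow> real" where
  "sk_integrand f g l u = (SUP t\<in>{0..}. min 1 (dist (f (min t u)) (g (min (l t) u))))"

definition skorokhod_dist :: "(real \<Rightarrow> 'a::metric_space) \<Rightarrow> (real \<Rightarrow> 'a) \<Rightarrow> ereal" where
  "skorokhod_dist f g = (INF l\<in>Lambda_set.
      max (gamma_sk l)
          (enn2ereal (\<integral>\<^sup>+ u. indicator {0..} u * ennreal (exp (- u) * sk_integrand f g l u) \<partial>lborel)))"

definition phi_t :: "('a \<Rightarrow> real) \<Rightarrow> ('a \<Rightarrow> real) \<Rightarrow> ('a \<Rightarrow> real) \<Rightarrow> real \<Rightarrow> (real \<Rightarrow> 'a) \<Rightarrow> real" where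
  "phi_t lam kap mu t f = (LBINT s:{0..t}. lam (f s) * exp (- kap (f s) * (LBINT r:{s..t}. mu (f r))))"

end

theory Submission
  imports Defs
begin

text \<open>If \<open>g\<close> is Skorokhod-close to \<open>f\<close>, a time change with slope close to \<open>1\<close> matches them, so
  every value \<open>g s\<close>, \<open>s \<in> [0, t]\<close>, is close to a value \<open>f w\<close> with \<open>w\<close> close to \<open>s\<close>. Along a
  sequence \<open>g\<^sub>n \<rightarrow> f\<close> this gives \<open>g\<^sub>n s \<rightarrow> f s\<close> at every continuity point of \<open>f\<close>, i.e. off the
  countably many jumps of the cadlag path \<open>f\<close>, and it keeps \<open>g\<^sub>n\<close> inside a neighbourhood of the
  relatively compact set \<open>f [0, 2t + 1]\<close> on which \<open>\<lambda>\<close> and \<open>\<mu>\<close> are bounded. Dominated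
  convergence, first for the inner integral of \<open>\<mu>\<close> and then for the outer one (whose integrand
  is bounded by \<open>\<lambda>\<close> because \<open>\<kappa>, \<mu> \<ge> 0\<close>), yields \<open>\<phi>\<^sub>t g\<^sub>n \<rightarrow> \<phi>\<^sub>t f\<close>.\<close>

section \<open>Jumps of cadlag paths\<close>

definition jumps :: "(real \<Rightarrow> 'a::metric_space) \<Rightarrow> real set" where
  "jumps f = {s. 0 < s \<and> \<not> (f \<longlongrightarrow> f s) (at_left s)}"

definition big_jumps :: "(real \<Rightarrow> 'a::metric_space) \<Rightarrow> real \<Rightarrow> real set" where
  "big_jumps f e = {s. 0 < s \<and> (\<forall>l. (f \<longlongrightarrow> l) (at_left s) \<longrightarrow> e \<le> dist l (f s))}"

lemma cadlag_left_limit: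
  assumes "cadlag f" "s > 0"
  obtains l where "(f \<longlongrightarrow> l) (at_left s)"
  using assms unfolding cadlag_def by (meson less_eq_real_def)

lemma cadlag_tendsto_within_nonneg:
  assumes "cadlag f" "s \<ge> 0" "s \<notin> jumps f"
  shows "(f \<longlongrightarrow> f s) (at s within {0..})"
proof (cases "s = 0")
  case True
  then show ?thesis using assms(1) unfolding cadlag_def by (simp add: at_within_Ici_at_right)
next
  case False
  then have "(f \<longlongrightarrow> f s) (at_left s)" "(f \<longlongrightarrow> f s) (at_right s)"
    using assms unfolding jumps_def cadlag_def by auto
  then have "(f \<longlongrightarrow> f s) (at s)" by (rule filterlim_split_at)
  then show ?thesis by (rule tendsto_within_subset) simp
qed

lemma left_limit_dist_less:
  fixes f :: "real \<Rightarrow> 'a::metric_space"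
  assumes near: "\<forall>x\<in>{a<..<b}. dist (f x) c < e/2" and s: "s \<in> {a<..<b}"
    and l: "(f \<longlongrightarrow> l) (at_left s)"
  shows "dist l (f s) < e"
proof -
  have "eventually (\<lambda>x. x \<in> {a<..<s}) (at_left s)"
    using s eventually_at_left_real[of a s] by auto
  then have "eventually (\<lambda>x. dist (f x) c \<le> e/2) (at_left s)"
    by eventually_elim (use near s in \<open>auto intro: less_imp_le\<close>)
  with tendsto_dist[OF l tendsto_const] have "dist l c \<le> e/2"
    by (intro tendsto_upperbound) (auto simp: trivial_limit_at_left_real)
  moreover have "dist (f s) c < e/2" using near s by auto
  ultimately show ?thesis by (metis dist_triangle2 le_less_trans add_le_less_mono field_sum_of_halves)
qed

text \<open>Right-continuity at \<open>y\<close> and the left limit at \<open>y\<close> keep \<open>f\<close> within \<open>e/2\<close> of a constant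
  on each side of \<open>y\<close>, which rules out jumps of size \<open>e\<close> there.\<close>
lemma big_jumps_isolated:
  fixes f :: "real \<Rightarrow> 'a::metric_space"
  assumes f: "cadlag f" and e: "e > 0" and y: "y \<ge> 0"
  obtains \<rho> where "\<rho> > 0" "\<And>s. s \<in> big_jumps f e \<Longrightarrow> \<bar>s - y\<bar> < \<rho> \<Longrightarrow> s = y"
proof -
  have no_jump: False if "s \<in> big_jumps f e" "s \<in> {a<..<b}" "\<forall>x\<in>{a<..<b}. dist (f x) c < e/2"
    for s a b c
  proof -
    have "s > 0" using that(1) by (simp add: big_jumps_def)
    then obtain l where l: "(f \<longlongrightarrow> l) (at_left s)" by (rule cadlag_left_limit[OF f])
    then have "dist l (f s) < e" using left_limit_dist_less that(2,3) by blast
    then show False using that(1) l by (auto simp: big_jumps_def)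
  qed
  have "(f \<longlongrightarrow> f y) (at_right y)" using f y unfolding cadlag_def by auto
  then have "eventually (\<lambda>x. dist (f x) (f y) < e/2) (at_right y)"
    using tendstoD e half_gt_zero by blast
  then obtain b1 where b1: "b1 > y" "\<forall>x\<in>{y<..<b1}. dist (f x) (f y) < e/2"
    by (auto simp: eventually_at_right[of y "y+1"])
  obtain b0 where b0: "b0 < y" "\<And>s. s \<in> big_jumps f e \<Longrightarrow> s \<in> {b0<..<y} \<Longrightarrow> False"
  proof (cases "y = 0")
    case True
    then show ?thesis by (intro that[of "-1"]) (auto simp: big_jumps_def)
  next
    case False
    with y have "y > 0" by simp
    then obtain L where "(f \<longlongrightarrow> L) (at_left y)" by (rule cadlag_left_limit[OF f])
    then have "eventually (\<lambda>x. dist (f x) L < e/2) (at_left y)"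
      using tendstoD e half_gt_zero by blast
    then obtain b0 where b0: "b0 < y" "\<forall>x\<in>{b0<..<y}. dist (f x) L < e/2"
      by (auto simp: eventually_at_left[of "y - 1" y])
    show ?thesis
    proof (rule that[of b0])
      fix s assume "s \<in> big_jumps f e" "s \<in> {b0<..<y}"
      then show False using no_jump[of s b0 y L] b0(2) by blast
    qed (rule b0(1))
  qed
  show ?thesis
  proof (rule that[of "min (b1 - y) (y - b0)"])
    fix s assume s: "s \<in> big_jumps f e" "\<bar>s - y\<bar> < min (b1 - y) (y - b0)"
    show "s = y"
    proof (rule ccontr)
      assume "s \<noteq> y"
      then consider "s \<in> {b0<..<y}" | "s \<in> {y<..<b1}" using s(2) by fastforce
      then show False
        using no_jump[of s y b1 "f y"] b0(2)[OF s(1)] s(1) b1(2) by cases blast+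
    qed
  qed (use b0 b1 in simp)
qed

lemma finite_big_jumps_le:
  fixes f :: "real \<Rightarrow> 'a::metric_space"
  assumes f: "cadlag f" and e: "e > 0"
  shows "finite (big_jumps f e \<inter> {..m})"
proof (rule ccontr)
  assume "infinite (big_jumps f e \<inter> {..m})"
  moreover have "big_jumps f e \<inter> {..m} \<subseteq> {0..m}" by (auto simp: big_jumps_def)
  ultimately obtain y where y: "y \<in> {0..m}" "y islimpt (big_jumps f e \<inter> {..m})"
    using Heine_Borel_imp_Bolzano_Weierstrass[OF compact_Icc] by blast
  obtain \<rho> where "\<rho> > 0" "\<And>s. s \<in> big_jumps f e \<Longrightarrow> \<bar>s - y\<bar> < \<rho> \<Longrightarrow> s = y"
    using big_jumps_isolated[OF f e, of y] y(1) by auto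
  moreover obtain s where "s \<in> big_jumps f e" "s \<noteq> y" "\<bar>s - y\<bar> < \<rho>"
    using y(2) \<open>\<rho> > 0\<close> unfolding islimpt_approachable_real by blast
  ultimately show False by blast
qed

lemma countable_jumps:
  fixes f :: "real \<Rightarrow> 'a::metric_space"
  assumes f: "cadlag f"
  shows "countable (jumps f)"
proof -
  have "jumps f \<subseteq> (\<Union>m::nat. \<Union>k::nat. big_jumps f (1 / Suc k) \<inter> {..real m})"
  proof
    fix s assume s: "s \<in> jumps f"
    then have s0: "s > 0" by (auto simp: jumps_def)
    obtain l where l: "(f \<longlongrightarrow> l) (at_left s)" using cadlag_left_limit[OF f s0] .
    then have "dist l (f s) > 0" using s by (auto simp: jumps_def)
    then obtain k where k: "inverse (real (Suc k)) < dist l (f s)" using reals_Archimedean by blast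
    obtain m :: nat where m: "s \<le> real m" using real_arch_simple by blast
    have "l' = l" if "(f \<longlongrightarrow> l') (at_left s)" for l'
      using tendsto_unique[OF _ that l] by (simp add: trivial_limit_at_left_real)
    then have "s \<in> big_jumps f (1 / Suc k) \<inter> {..real m}"
      using s0 k m by (auto simp: big_jumps_def inverse_eq_divide)
    then show "s \<in> (\<Union>m::nat. \<Union>k::nat. big_jumps f (1 / Suc k) \<inter> {..real m})" by blast
  qed
  moreover have "countable (big_jumps f (1 / Suc k) \<inter> {..real m})" for k m
    by (intro countable_finite finite_big_jumps_le[OF f]) simp
  then have "countable (\<Union>m::nat. \<Union>k::nat. big_jumps f (1 / Suc k) \<inter> {..real m})" by blast
  ultimately show ?thesis by (rule countable_subset)
qed

section \<open>Boundedness near a cadlag path\<close>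

lemma cadlag_subseq_convergent:
  fixes f :: "real \<Rightarrow> 'a::metric_space" and s :: "nat \<Rightarrow> real"
  assumes f: "cadlag f" and s: "\<And>n. s n \<in> {0..T}"
  shows "\<exists>r y. strict_mono r \<and> (\<lambda>n. f (s (r n))) \<longlonglongrightarrow> y"
proof -
  have "\<forall>n. s n \<in> {0..T}" using s ..
  then obtain x r1 where x: "x \<in> {0..T}" "strict_mono r1" "(s \<circ> r1) \<longlonglongrightarrow> x"
    by (rule seq_compactE[OF compact_imp_seq_compact[OF compact_Icc]])
  obtain r2 where r2: "strict_mono r2" "monoseq (\<lambda>n. s (r1 (r2 n)))"
    using seq_monosub[of "\<lambda>n. s (r1 n)"] by blast
  define \<sigma> where "\<sigma> = (\<lambda>n. s (r1 (r2 n)))"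
  have \<sigma>: "\<sigma> \<longlonglongrightarrow> x" using LIMSEQ_subseq_LIMSEQ[OF x(3) r2(1)] by (simp add: \<sigma>_def o_def)
  have "\<exists>y. (\<lambda>n. f (\<sigma> n)) \<longlonglongrightarrow> y"
  proof (cases "decseq \<sigma>")
    case True
    then have "\<sigma> n \<in> {x..}" for n using decseq_ge[OF True \<sigma>] by simp
    moreover have "continuous (at x within {x..}) f"
      using f x(1) unfolding cadlag_def continuous_within by (simp add: at_within_Ici_at_right)
    ultimately have "(\<lambda>n. f (\<sigma> n)) \<longlonglongrightarrow> f x"
      using continuous_within_tendsto_compose' \<sigma> by blast
    then show ?thesis ..
  next
    case False
    then have inc: "incseq \<sigma>" using r2(2) unfolding monoseq_iff \<sigma>_def by blast
    show ?thesis
    proof (cases "\<exists>n. \<sigma> n = x")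
      case True
      then obtain n where n: "\<sigma> n = x" by blast
      have "\<sigma> m = x" if "n \<le> m" for m
        using incseqD[OF inc that] incseq_le[OF inc \<sigma>, of m] n by linarith
      then have "eventually (\<lambda>m. f (\<sigma> m) = f x) sequentially"
        unfolding eventually_sequentially by auto
      then have "(\<lambda>n. f (\<sigma> n)) \<longlonglongrightarrow> f x" by (rule tendsto_eventually)
      then show ?thesis ..
    next
      case False
      have lt: "\<sigma> m < x" for m using incseq_le[OF inc \<sigma>, of m] False by (auto simp: le_less)
      have "0 \<le> \<sigma> 0" using s by (simp add: \<sigma>_def)
      with lt have "x > 0" by (meson le_less_trans)
      then obtain L where L: "(f \<longlongrightarrow> L) (at_left x)" by (rule cadlag_left_limit[OF f])
      have "filterlim \<sigma> (at_left x) sequentially"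
        by (rule tendsto_imp_filterlim_at_left[OF \<sigma>]) (simp add: lt)
      then have "(\<lambda>n. f (\<sigma> n)) \<longlonglongrightarrow> L" by (rule filterlim_compose[OF L])
      then show ?thesis ..
    qed
  qed
  moreover have "strict_mono (r1 \<circ> r2)" using x(2) r2(1) by (rule strict_mono_o)
  ultimately show ?thesis unfolding \<sigma>_def o_def by blast
qed

text \<open>The closure of the range of a cadlag path over \<open>[0, T]\<close> is compact, so a continuous \<open>h\<close>
  is bounded on a whole neighbourhood of it.\<close>
lemma continuous_bounded_near_cadlag:
  fixes f :: "real \<Rightarrow> 'a::metric_space" and h :: "'a \<Rightarrow> real"
  assumes f: "cadlag f" and h: "continuous_on UNIV h"
  shows "\<exists>\<delta>>0. \<exists>B. \<forall>s\<in>{0..T}. \<forall>y. dist y (f s) < \<delta> \<longrightarrow> \<bar>h y\<bar> \<le> B"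
proof (rule ccontr)
  assume contra: "\<not> ?thesis"
  have "\<exists>s y. s \<in> {0..T} \<and> dist y (f s) < inverse (real (Suc n)) \<and> real n < \<bar>h y\<bar>" for n
  proof -
    have "inverse (real (Suc n)) > 0" by simp
    then have "\<not> (\<forall>s\<in>{0..T}. \<forall>y. dist y (f s) < inverse (real (Suc n)) \<longrightarrow> \<bar>h y\<bar> \<le> real n)"
      using contra by blast
    then show ?thesis by (auto simp: not_le)
  qed
  then obtain s y where "\<And>n. s n \<in> {0..T} \<and> dist (y n) (f (s n)) < inverse (real (Suc n)) \<and>
      real n < \<bar>h (y n)\<bar>"
    by metis
  then have sy: "\<And>n. s n \<in> {0..T}" "\<And>n. dist (y n) (f (s n)) < inverse (real (Suc n))"
    "\<And>n. real n < \<bar>h (y n)\<bar>"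
    by auto
  obtain r z where r: "strict_mono r" "(\<lambda>n. f (s (r n))) \<longlonglongrightarrow> z"
    using cadlag_subseq_convergent[OF f, of s T] sy(1) by blast
  have "(\<lambda>n. inverse (real (Suc (r n)))) \<longlonglongrightarrow> 0"
    using LIMSEQ_subseq_LIMSEQ[OF LIMSEQ_inverse_real_of_nat r(1)] by (simp add: o_def)
  then have "(\<lambda>n. dist (y (r n)) (f (s (r n)))) \<longlonglongrightarrow> 0"
    by (rule tendsto_sandwich[rotated 2, OF tendsto_const])
      (intro always_eventually allI less_imp_le sy(2) zero_le_dist)+
  then have "(\<lambda>n. dist (y (r n)) (f (s (r n))) + dist (f (s (r n))) z) \<longlonglongrightarrow> 0"
    using tendsto_add[OF _ tendsto_dist_iff[THEN iffD1, OF r(2)]] by simp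
  then have "(\<lambda>n. dist (y (r n)) z) \<longlonglongrightarrow> 0"
    by (rule tendsto_sandwich[rotated 2, OF tendsto_const])
      (intro always_eventually allI dist_triangle zero_le_dist)+
  then have "(\<lambda>n. y (r n)) \<longlonglongrightarrow> z" by (rule tendsto_dist_iff[THEN iffD2])
  then have "(\<lambda>n. h (y (r n))) \<longlonglongrightarrow> h z" using continuous_on_tendsto_compose[OF h] by fastforce
  then have "Bseq (\<lambda>n. h (y (r n)))" by (rule convergent_imp_Bseq[OF convergentI])
  then obtain K where K: "\<And>n. norm (h (y (r n))) \<le> K" unfolding Bseq_def by blast
  obtain n :: nat where "K \<le> real n" using real_arch_simple by blast
  moreover have "real n \<le> real (r n)" using seq_suble[OF r(1)] by simp
  ultimately show False using K[of n] sy(3)[of "r n"] by simp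
qed

section \<open>Skorokhod closeness\<close>

lemma Lambda_set_image:
  assumes "l \<in> Lambda_set"
  shows "l ` {0..} = {0..}"
proof -
  from assms obtain l' where "homeomorphism {0..} {0..} l l'"
    unfolding Lambda_set_def by blast
  then show ?thesis unfolding homeomorphism_def by blast
qed

lemma Lambda_set_zero:
  assumes l: "l \<in> Lambda_set"
  shows "l 0 = 0"
proof -
  have "0 \<in> l ` {0..}" "l 0 \<in> {0..}" using Lambda_set_image[OF l] by auto
  then obtain x where x: "x \<ge> 0" "l x = 0" "l 0 \<ge> 0" by auto
  have "mono_on {0..} l" using l unfolding Lambda_set_def by blast
  then have "l 0 \<le> l x" by (rule mono_onD) (use x in auto)
  with x show ?thesis by simp
qed

lemma gamma_sk_less_imp_abs_ln_diff_less:
  assumes l: "l \<in> Lambda_set" and gamma: "gamma_sk l < ereal d" and w: "w > 0"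
  shows "\<bar>ln (l w) - ln w\<bar> < d"
proof -
  have "l 0 = 0" using l by (rule Lambda_set_zero)
  have "ereal \<bar>ln (l w - l 0) - ln (w - 0)\<bar> \<le> gamma_sk l"
    unfolding gamma_sk_def by (rule SUP_upper2[of "(0, w)"]) (use w in auto)
  also note gamma
  finally show ?thesis using \<open>l 0 = 0\<close> by simp
qed

lemma sk_integrand_le_somewhere:
  assumes small: "(\<integral>\<^sup>+ u. indicator {0..} u * ennreal (exp (- u) * sk_integrand f g l u) \<partial>lborel)
      < ennreal (exp (- (T + 1)) * c)"
    and T: "T \<ge> 0" and c: "c \<ge> 0"
  shows "\<exists>u\<in>{T..T+1}. sk_integrand f g l u \<le> c"
proof (rule ccontr)
  assume "\<not> ?thesis"
  then have big: "c < sk_integrand f g l u" if "u \<in> {T..T+1}" for u using that by force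
  have "(\<integral>\<^sup>+ u. ennreal (exp (- (T + 1)) * c) * indicator {T..T+1} u \<partial>lborel)
      \<le> (\<integral>\<^sup>+ u. indicator {0..} u * ennreal (exp (- u) * sk_integrand f g l u) \<partial>lborel)"
  proof (rule nn_integral_mono)
    fix u :: real
    show "ennreal (exp (- (T + 1)) * c) * indicator {T..T+1} u
        \<le> indicator {0..} u * ennreal (exp (- u) * sk_integrand f g l u)"
    proof (cases "u \<in> {T..T+1}")
      case True
      then have "exp (- (T + 1)) * c \<le> exp (- u) * sk_integrand f g l u"
        using big[OF True] c by (intro mult_mono) auto
      then show ?thesis using True T by (auto intro: ennreal_leI)
    qed simp
  qed
  with small show False by (simp add: nn_integral_cmult_indicator)
qed

lemma sk_integrand_ge_dist:
  assumes "0 \<le> w" "w \<le> u" "l w \<le> u"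
  shows "min 1 (dist (f w) (g (l w))) \<le> sk_integrand f g l u"
proof -
  have "min 1 (dist (f (min w u)) (g (min (l w) u))) \<le> sk_integrand f g l u"
    unfolding sk_integrand_def by (rule cSUP_upper) (use assms in \<open>auto intro: bdd_aboveI2[where M=1]\<close>)
  with assms show ?thesis by (simp add: min_absorb1)
qed

lemma skorokhod_dist_lessE:
  assumes "skorokhod_dist f g < ereal d"
  obtains l where "l \<in> Lambda_set" "gamma_sk l < ereal d"
    "(\<integral>\<^sup>+ u. indicator {0..} u * ennreal (exp (- u) * sk_integrand f g l u) \<partial>lborel) < ennreal d"
proof -
  define N where "N l = (\<integral>\<^sup>+ u. indicator {0..} u * ennreal (exp (- u) * sk_integrand f g l u) \<partial>lborel)"
    for l
  obtain l where l: "l \<in> Lambda_set" and less: "gamma_sk l < ereal d" "enn2ereal (N l) < ereal d"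
    using assms unfolding skorokhod_dist_def INF_less_iff N_def by auto
  have "ereal 0 < ereal d" using le_less_trans[OF enn2ereal_nonneg less(2)] by simp
  then have "0 < d" by simp
  with l less show ?thesis unfolding N_def by (intro that) (auto simp: less_ennreal.rep_eq)
qed

lemma abs_ln_diff_less_imp_less_mult:
  fixes s w m :: real
  assumes "0 < s" "0 < w" "m > 0" "\<bar>ln w - ln s\<bar> < ln (1 + m)"
  shows "w < (1 + m) * s"
proof -
  have "ln w < ln ((1 + m) * s)" using assms by (simp add: ln_mult)
  then show ?thesis using assms by simp
qed

text \<open>The time change \<open>l\<close> of a near-optimal Skorokhod matching has slope close to \<open>1\<close>, so
  \<open>w = l\<^sup>-\<^sup>1 s\<close> stays within \<open>m T\<close> of \<open>s\<close>, and a small integrand at \<open>u \<ge> T\<close> makes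
  \<open>g s = g (l w)\<close> close to \<open>f w\<close>.\<close>
lemma time_change_near_graph:
  assumes l: "l \<in> Lambda_set" and gamma: "gamma_sk l < ereal (ln (1 + m))" and m: "0 < m"
    and u: "T \<le> u" "sk_integrand f g l u \<le> c" "c < 1"
    and s: "s \<in> {0..t}" and T: "(1 + m) * t \<le> T"
  shows "\<exists>w\<in>{0..T}. \<bar>w - s\<bar> \<le> m * T \<and> dist (f w) (g s) \<le> c"
proof -
  have "(1 + m) * s \<le> (1 + m) * t" using s m by (intro mult_left_mono) auto
  with T have sT: "s \<le> (1 + m) * s" "(1 + m) * s \<le> T"
    using s m by (auto simp: algebra_simps)
  obtain w where w: "w \<ge> 0" "l w = s" "w \<le> (1 + m) * s" "\<bar>w - s\<bar> \<le> m * T"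
  proof (cases "s = 0")
    case True
    then show ?thesis using Lambda_set_zero[OF l] m sT by (intro that[of 0]) auto
  next
    case False
    have "s \<in> l ` {0..}" using Lambda_set_image[OF l] s by auto
    then obtain w where w: "w \<ge> 0" "l w = s" by auto
    with False Lambda_set_zero[OF l] s have pos: "0 < s" "0 < w" by (auto simp: le_less)
    have "\<bar>ln (l w) - ln w\<bar> < ln (1 + m)"
      by (rule gamma_sk_less_imp_abs_ln_diff_less[OF l gamma pos(2)])
    then have "w < (1 + m) * s" "s < (1 + m) * w"
      using abs_ln_diff_less_imp_less_mult[of s w m] abs_ln_diff_less_imp_less_mult[of w s m]
        pos m w(2) by (auto simp: abs_minus_commute)
    moreover have "m * s \<le> m * T" "m * w \<le> m * T"
      using sT \<open>w < (1 + m) * s\<close> m by (auto intro!: mult_left_mono)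
    ultimately show ?thesis using w by (intro that[of w]) (auto simp: algebra_simps)
  qed
  then have "min 1 (dist (f w) (g (l w))) \<le> sk_integrand f g l u"
    using sk_integrand_ge_dist[of w u l f g] sT u(1) by simp
  with w sT u(2,3) show ?thesis
    by (intro bexI[of _ w]) (auto simp: min_def split: if_splits)
qed

lemma skorokhod_dist_small_imp_near_graph:
  fixes f :: "real \<Rightarrow> 'a::metric_space"
  assumes t: "t \<ge> 0" and \<eta>: "\<eta> > 0"
  shows "\<exists>d>0. \<forall>g s. skorokhod_dist f g < ereal d \<longrightarrow> s \<in> {0..t} \<longrightarrow>
           (\<exists>w\<in>{0..2*t+1}. \<bar>w - s\<bar> < \<eta> \<and> dist (f w) (g s) < \<eta>)"
proof -
  define T where "T = 2*t + 1"
  define c where "c = min (1/2) (\<eta>/2)"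
  define m where "m = min 1 (\<eta> / (T + 1))"
  define d where "d = min (ln (1 + m)) (exp (- (T + 1)) * c)"
  have T: "T \<ge> 0" and c: "0 < c" "c < 1" "c < \<eta>" using t \<eta> by (auto simp: T_def c_def)
  have "m \<le> \<eta> / (T + 1)" by (simp add: m_def)
  then have "m * (T + 1) \<le> \<eta>" using T by (simp add: pos_le_divide_eq)
  then have m: "0 < m" "m \<le> 1" "m * (T + 1) \<le> \<eta>" using \<eta> T by (auto simp: m_def)
  have "m * T < m * (T + 1)" using m(1) by (simp add: algebra_simps)
  with m(3) have mT: "m * T < \<eta>" by linarith
  have "m * t \<le> t" using m t by (simp add: mult_left_le_one_le)
  then have tT: "(1 + m) * t \<le> T" by (simp add: T_def algebra_simps)
  have d: "0 < d" using m c by (simp add: d_def)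
  have "\<exists>w\<in>{0..T}. \<bar>w - s\<bar> < \<eta> \<and> dist (f w) (g s) < \<eta>"
    if less: "skorokhod_dist f g < ereal d" and s: "s \<in> {0..t}" for g s
  proof -
    obtain l where l: "l \<in> Lambda_set" "gamma_sk l < ereal d"
      "(\<integral>\<^sup>+ u. indicator {0..} u * ennreal (exp (- u) * sk_integrand f g l u) \<partial>lborel) < ennreal d"
      using less by (rule skorokhod_dist_lessE)
    have "gamma_sk l < ereal (ln (1 + m))"
      using l(2) by (rule less_le_trans) (simp add: d_def)
    moreover obtain u where u: "u \<in> {T..T+1}" "sk_integrand f g l u \<le> c"
    proof -
      have "ennreal d \<le> ennreal (exp (- (T + 1)) * c)" by (simp add: d_def ennreal_leI)
      with l(3) have "(\<integral>\<^sup>+ u. indicator {0..} u * ennreal (exp (- u) * sk_integrand f g l u) \<partial>lborel)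
          < ennreal (exp (- (T + 1)) * c)" by (rule less_le_trans)
      from sk_integrand_le_somewhere[OF this T less_imp_le[OF c(1)]] that show ?thesis by blast
    qed
    ultimately obtain w where "w \<in> {0..T}" "\<bar>w - s\<bar> \<le> m * T" "dist (f w) (g s) \<le> c"
      using time_change_near_graph[OF l(1) _ m(1) _ u(2) c(2) s tT] u(1) by auto
    with mT c show ?thesis by (intro bexI[of _ w]) auto
  qed
  with d show ?thesis unfolding T_def by blast
qed

section \<open>Integrability along cadlag paths\<close>

lemma set_borel_measurable_continuous_off_countable:
  fixes F :: "real \<Rightarrow> real"
  assumes D: "countable D" and F: "\<And>s. s \<in> {a..b} - D \<Longrightarrow> (F \<longlongrightarrow> F s) (at s within {a..b})"
  shows "set_borel_measurable lborel {a..b} F"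
proof -
  have "D \<in> sets borel" using countable_imp_null_set_lborel[OF D] by (auto dest: null_setsD2)
  then have S: "{a..b} - D \<in> sets borel" by auto
  have "continuous_on ({a..b} - D) F"
    unfolding continuous_on_def using F by (blast intro: tendsto_within_subset)
  then have "(\<lambda>x. indicator ({a..b} - D) x *\<^sub>R F x) \<in> borel_measurable borel"
    by (rule borel_measurable_continuous_on_indicator[OF S])
  then have "(\<lambda>x. indicator {a..b} x *\<^sub>R F x) \<in> borel_measurable borel"
    by (rule measurable_discrete_difference[OF _ D]) (auto simp: indicator_def)
  then show ?thesis unfolding set_borel_measurable_def by simp
qed

lemma set_integrable_bounded_continuous_off_countable:
  fixes F :: "real \<Rightarrow> real"
  assumes "countable D" "\<And>s. s \<in> {a..b} - D \<Longrightarrow> (F \<longlongrightarrow> F s) (at s within {a..b})"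
    and B: "\<And>s. s \<in> {a..b} \<Longrightarrow> \<bar>F s\<bar> \<le> B"
  shows "set_integrable lborel {a..b} F"
  unfolding set_integrable_def
proof (rule integrableI_bounded_set[where A="{a..b}" and B=B])
  show "(\<lambda>x. indicator {a..b} x *\<^sub>R F x) \<in> borel_measurable lborel"
    using set_borel_measurable_continuous_off_countable[OF assms(1,2)]
    unfolding set_borel_measurable_def .
qed (use B in \<open>auto simp: indicator_def emeasure_lborel_Icc_eq\<close>)

lemma cadlag_comp_tendsto_within:
  fixes g :: "real \<Rightarrow> 'a::metric_space" and h :: "'a \<Rightarrow> real"
  assumes g: "cadlag g" and h: "continuous_on UNIV h" and s: "s \<ge> 0" "s \<notin> jumps g"
    and S: "S \<subseteq> {0..}"
  shows "((\<lambda>x. h (g x)) \<longlongrightarrow> h (g s)) (at s within S)"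
proof -
  have "(g \<longlongrightarrow> g s) (at s within S)"
    by (rule tendsto_within_subset[OF cadlag_tendsto_within_nonneg[OF g s] S])
  with h show ?thesis by (auto intro: continuous_on_tendsto_compose)
qed

lemma set_integrable_cadlag_comp:
  fixes g :: "real \<Rightarrow> 'a::metric_space" and h :: "'a \<Rightarrow> real"
  assumes g: "cadlag g" and h: "continuous_on UNIV h" and a: "a \<ge> 0"
  shows "set_integrable lborel {a..b} (\<lambda>x. h (g x))"
proof -
  obtain \<delta> B where "\<delta> > 0" and near: "\<forall>s\<in>{0..b}. \<forall>y. dist y (g s) < \<delta> \<longrightarrow> \<bar>h y\<bar> \<le> B"
    using continuous_bounded_near_cadlag[OF g h] by blast
  have B: "\<bar>h (g s)\<bar> \<le> B" if "s \<in> {a..b}" for s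
  proof -
    have "s \<in> {0..b}" using that a by auto
    with near \<open>\<delta> > 0\<close> show ?thesis by simp
  qed
  show ?thesis
    by (rule set_integrable_bounded_continuous_off_countable[OF countable_jumps[OF g] _ B])
      (use a in \<open>auto intro: cadlag_comp_tendsto_within[OF g h]\<close>)
qed

lemma continuous_on_cadlag_tail_integral:
  fixes g :: "real \<Rightarrow> 'a::metric_space" and h :: "'a \<Rightarrow> real"
  assumes g: "cadlag g" and h: "continuous_on UNIV h"
  shows "continuous_on {0..t} (\<lambda>s. LBINT r:{s..t}. h (g r))"
proof -
  have "(\<lambda>r. h (g r)) integrable_on {0..t}"
    by (rule set_borel_integral_eq_integral(1)[OF set_integrable_cadlag_comp[OF g h]]) simp
  then have "continuous_on {0..t} (\<lambda>s. integral {s..t} (\<lambda>r. h (g r)))"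
    by (rule indefinite_integral_continuous_1')
  moreover have "(LBINT r:{s..t}. h (g r)) = integral {s..t} (\<lambda>r. h (g r))" if "s \<in> {0..t}" for s
    using that by (intro set_borel_integral_eq_integral(2) set_integrable_cadlag_comp[OF g h]) simp
  ultimately show ?thesis by (rule continuous_on_cong[OF refl, THEN iffD2, rotated])
qed

definition phi_integrand :: "('a \<Rightarrow> real) \<Rightarrow> ('a \<Rightarrow> real) \<Rightarrow> ('a \<Rightarrow> real) \<Rightarrow> real \<Rightarrow> (real \<Rightarrow> 'a) \<Rightarrow> real \<Rightarrow> real"
  where "phi_integrand lam kap mu t g s = lam (g s) * exp (- kap (g s) * (LBINT r:{s..t}. mu (g r)))"

lemma phi_t_eq_set_integral: "phi_t lam kap mu t g = (LBINT s:{0..t}. phi_integrand lam kap mu t g s)"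
  by (simp add: phi_t_def phi_integrand_def)

lemma phi_integrand_tendsto_within:
  fixes g :: "real \<Rightarrow> 'a::metric_space"
  assumes g: "cadlag g" and cont: "continuous_on UNIV lam" "continuous_on UNIV kap" "continuous_on UNIV mu"
    and s: "s \<in> {0..t} - jumps g"
  shows "(phi_integrand lam kap mu t g \<longlongrightarrow> phi_integrand lam kap mu t g s) (at s within {0..t})"
proof -
  have path: "((\<lambda>x. h (g x)) \<longlongrightarrow> h (g s)) (at s within {0..t})" if "continuous_on UNIV h" for h :: "'a \<Rightarrow> real"
    by (rule cadlag_comp_tendsto_within[OF g that]) (use s in auto)
  have "((\<lambda>x. LBINT r:{x..t}. mu (g r)) \<longlongrightarrow> (LBINT r:{s..t}. mu (g r))) (at s within {0..t})"
    using continuous_on_cadlag_tail_integral[OF g cont(3), of t] s unfolding continuous_on_def by blast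
  then show ?thesis unfolding phi_integrand_def
    by (intro tendsto_mult path cont tendsto_exp tendsto_minus)
qed

lemma set_borel_measurable_phi_integrand:
  fixes g :: "real \<Rightarrow> 'a::metric_space"
  assumes g: "cadlag g" and "continuous_on UNIV lam" "continuous_on UNIV kap" "continuous_on UNIV mu"
  shows "set_borel_measurable lborel {0..t} (phi_integrand lam kap mu t g)"
  by (rule set_borel_measurable_continuous_off_countable[OF countable_jumps[OF g]
        phi_integrand_tendsto_within[OF assms]])

section \<open>Convergence of \<open>phi_t\<close>\<close>

text \<open>This is all of Skorokhod convergence on \<open>[0, t]\<close> that the proof uses.\<close>
definition graph_convergent :: "(real \<Rightarrow> 'a::metric_space) \<Rightarrow> (nat \<Rightarrow> real \<Rightarrow> 'a) \<Rightarrow> real \<Rightarrow> real \<Rightarrow> bool"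
  where "graph_convergent f G t T \<longleftrightarrow> (\<forall>\<eta>>0. \<forall>\<^sub>F n in sequentially.
           \<forall>s\<in>{0..t}. \<exists>w\<in>{0..T}. \<bar>w - s\<bar> < \<eta> \<and> dist (f w) (G n s) < \<eta>)"

lemma graph_convergentD:
  assumes "graph_convergent f G t T" "\<eta> > 0"
  shows "\<forall>\<^sub>F n in sequentially. \<forall>s\<in>{0..t}. \<exists>w\<in>{0..T}. \<bar>w - s\<bar> < \<eta> \<and> dist (f w) (G n s) < \<eta>"
  using assms unfolding graph_convergent_def by blast

lemma skorokhod_dist_tendsto_imp_graph_convergent:
  fixes f :: "real \<Rightarrow> 'a::metric_space"
  assumes t: "t \<ge> 0"
    and lim: "\<And>d. d > 0 \<Longrightarrow> \<forall>\<^sub>F n in sequentially. skorokhod_dist f (G n) < ereal d"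
  shows "graph_convergent f G t (2*t + 1)"
  unfolding graph_convergent_def
proof (intro allI impI)
  fix \<eta> :: real assume "\<eta> > 0"
  then obtain d where "d > 0" and near: "\<forall>g s. skorokhod_dist f g < ereal d \<longrightarrow> s \<in> {0..t} \<longrightarrow>
      (\<exists>w\<in>{0..2*t+1}. \<bar>w - s\<bar> < \<eta> \<and> dist (f w) (g s) < \<eta>)"
    using skorokhod_dist_small_imp_near_graph[OF t] by blast
  from lim[OF \<open>d > 0\<close>]
  show "\<forall>\<^sub>F n in sequentially. \<forall>s\<in>{0..t}. \<exists>w\<in>{0..2*t+1}. \<bar>w - s\<bar> < \<eta> \<and> dist (f w) (G n s) < \<eta>"
    by eventually_elim (use near in blast)
qed

lemma graph_convergent_tendsto:
  fixes f :: "real \<Rightarrow> 'a::metric_space"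
  assumes f: "cadlag f" and G: "graph_convergent f G t T" and s: "s \<in> {0..t} - jumps f"
  shows "(\<lambda>n. G n s) \<longlonglongrightarrow> f s"
proof (rule tendstoI)
  fix \<epsilon> :: real assume "\<epsilon> > 0"
  have "(f \<longlongrightarrow> f s) (at s within {0..})" by (rule cadlag_tendsto_within_nonneg[OF f]) (use s in auto)
  with \<open>\<epsilon> > 0\<close> obtain \<rho> where "\<rho> > 0"
    and \<rho>: "\<And>w. w \<ge> 0 \<Longrightarrow> w \<noteq> s \<Longrightarrow> dist w s < \<rho> \<Longrightarrow> dist (f w) (f s) < \<epsilon>/2"
    unfolding tendsto_iff eventually_at by (metis atLeast_iff half_gt_zero)
  have "min \<rho> (\<epsilon>/2) > 0" using \<open>\<rho> > 0\<close> \<open>\<epsilon> > 0\<close> by simp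
  from graph_convergentD[OF G this]
  show "\<forall>\<^sub>F n in sequentially. dist (G n s) (f s) < \<epsilon>"
  proof eventually_elim
    case (elim n)
    with s have "\<exists>w\<in>{0..T}. \<bar>w - s\<bar> < min \<rho> (\<epsilon>/2) \<and> dist (f w) (G n s) < min \<rho> (\<epsilon>/2)"
      by blast
    then obtain w where w: "w \<ge> 0" "\<bar>w - s\<bar> < \<rho>" "dist (f w) (G n s) < \<epsilon>/2" by auto
    have "dist (f w) (f s) < \<epsilon>/2"
      using \<rho>[OF w(1)] w(2) \<open>\<epsilon> > 0\<close> by (cases "w = s") (auto simp: dist_real_def)
    with w(3) show ?case using dist_triangle3[of "G n s" "f s" "f w"] by linarith
  qed
qed

lemma graph_convergent_eventually_bounded:
  fixes f :: "real \<Rightarrow> 'a::metric_space" and h :: "'a \<Rightarrow> real"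
  assumes f: "cadlag f" and h: "continuous_on UNIV h" and G: "graph_convergent f G t T"
  obtains B where "\<forall>\<^sub>F n in sequentially. \<forall>s\<in>{0..t}. \<bar>h (G n s)\<bar> \<le> B"
proof -
  obtain \<delta> B where "\<delta> > 0" and near: "\<forall>s\<in>{0..T}. \<forall>y. dist y (f s) < \<delta> \<longrightarrow> \<bar>h y\<bar> \<le> B"
    using continuous_bounded_near_cadlag[OF f h] by blast
  from graph_convergentD[OF G \<open>\<delta> > 0\<close>]
  have "\<forall>\<^sub>F n in sequentially. \<forall>s\<in>{0..t}. \<bar>h (G n s)\<bar> \<le> B"
    by eventually_elim (use near in \<open>metis dist_commute\<close>)
  then show ?thesis by (rule that)
qed

lemma set_integral_tendsto_bounded_off_countable:
  fixes F :: "nat \<Rightarrow> real \<Rightarrow> real"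
  assumes D: "countable D"
    and meas: "\<And>n. set_borel_measurable lborel {a..b} (F n)" "set_borel_measurable lborel {a..b} L"
    and lim: "\<And>s. s \<in> {a..b} - D \<Longrightarrow> (\<lambda>n. F n s) \<longlonglongrightarrow> L s"
    and bound: "\<forall>\<^sub>F n in sequentially. \<forall>s\<in>{a..b}. \<bar>F n s\<bar> \<le> B"
  shows "(\<lambda>n. LBINT s:{a..b}. F n s) \<longlonglongrightarrow> (LBINT s:{a..b}. L s)"
proof -
  obtain N where N: "\<And>n s. n \<ge> N \<Longrightarrow> s \<in> {a..b} \<Longrightarrow> \<bar>F n s\<bar> \<le> B"
    using bound unfolding eventually_sequentially by blast
  have "(\<lambda>n. LBINT s:{a..b}. F (n + N) s) \<longlonglongrightarrow> (LBINT s:{a..b}. L s)"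
    unfolding set_lebesgue_integral_def
  proof (rule integral_dominated_convergence[where w="\<lambda>s. indicator {a..b} s * B"])
    show "integrable lborel (\<lambda>s. indicator {a..b} s * B)"
      by (intro integrable_mult_left integrable_real_indicator) (auto simp: emeasure_lborel_Icc_eq)
    show "AE s in lborel. (\<lambda>n. indicator {a..b} s *\<^sub>R F (n + N) s) \<longlonglongrightarrow> indicator {a..b} s *\<^sub>R L s"
      using AE_not_in[OF countable_imp_null_set_lborel[OF D]]
    proof eventually_elim
      case (elim s)
      then show ?case
        using LIMSEQ_ignore_initial_segment[OF lim, of s N] by (cases "s \<in> {a..b}") auto
    qed
    show "AE s in lborel. norm (indicator {a..b} s *\<^sub>R F (n + N) s) \<le> indicator {a..b} s * B" for n
      using N[of "n + N"] by (intro AE_I2) (auto simp: indicator_def)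
  qed (use meas in \<open>auto simp: set_borel_measurable_def\<close>)
  then show ?thesis by (rule LIMSEQ_offset)
qed

lemma abs_phi_integrand_le:
  assumes "\<And>x. kap x \<ge> 0" "\<And>x. mu x \<ge> (0::real)"
  shows "\<bar>phi_integrand lam kap mu t g s\<bar> \<le> \<bar>lam (g s)\<bar>"
proof -
  have "0 \<le> (LBINT r:{s..t}. mu (g r))"
    unfolding set_lebesgue_integral_def by (rule Bochner_Integration.integral_nonneg) (simp add: assms)
  then have "exp (- kap (g s) * (LBINT r:{s..t}. mu (g r))) \<le> 1"
    using assms(1) by simp
  then show ?thesis unfolding phi_integrand_def by (simp add: abs_mult mult_left_le)
qed

lemma phi_t_tendsto:
  fixes f :: "real \<Rightarrow> 'a::metric_space" and G :: "nat \<Rightarrow> real \<Rightarrow> 'a"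
  assumes f: "cadlag f" and G: "\<And>n. cadlag (G n)"
    and cont: "continuous_on UNIV lam" "continuous_on UNIV kap" "continuous_on UNIV mu"
    and nonneg: "\<And>x. kap x \<ge> 0" "\<And>x. mu x \<ge> 0"
    and conv: "graph_convergent f G t T"
  shows "(\<lambda>n. phi_t lam kap mu t (G n)) \<longlonglongrightarrow> phi_t lam kap mu t f"
proof -
  obtain B1 where B1: "\<forall>\<^sub>F n in sequentially. \<forall>s\<in>{0..t}. \<bar>lam (G n s)\<bar> \<le> B1"
    using graph_convergent_eventually_bounded[OF f cont(1) conv] .
  obtain B3 where B3: "\<forall>\<^sub>F n in sequentially. \<forall>s\<in>{0..t}. \<bar>mu (G n s)\<bar> \<le> B3"
    using graph_convergent_eventually_bounded[OF f cont(3) conv] .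
  have path: "(\<lambda>n. h (G n s)) \<longlonglongrightarrow> h (f s)"
    if "continuous_on UNIV h" "s \<in> {0..t} - jumps f" for h :: "'a \<Rightarrow> real" and s
    using continuous_on_tendsto_compose[OF that(1) graph_convergent_tendsto[OF f conv that(2)]] by simp
  have meas: "set_borel_measurable lborel {s..t} (\<lambda>r. mu (g r))" if "cadlag g" "s \<ge> 0" for g s
    using set_integrable_cadlag_comp[OF that(1) cont(3) that(2)]
    unfolding set_integrable_def set_borel_measurable_def by (rule borel_measurable_integrable)
  have tail: "(\<lambda>n. LBINT r:{s..t}. mu (G n r)) \<longlonglongrightarrow> (LBINT r:{s..t}. mu (f r))"
    if s: "s \<in> {0..t}" for s
  proof (rule set_integral_tendsto_bounded_off_countable[OF countable_jumps[OF f]])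
    show "set_borel_measurable lborel {s..t} (\<lambda>r. mu (G n r))" for n using meas G s by simp
    show "set_borel_measurable lborel {s..t} (\<lambda>r. mu (f r))" using meas f s by simp
    show "(\<lambda>n. mu (G n r)) \<longlonglongrightarrow> mu (f r)" if "r \<in> {s..t} - jumps f" for r
      using path[OF cont(3)] that s by simp
    show "\<forall>\<^sub>F n in sequentially. \<forall>r\<in>{s..t}. \<bar>mu (G n r)\<bar> \<le> B3"
      using B3 by eventually_elim (use s in auto)
  qed
  have "(\<lambda>n. LBINT s:{0..t}. phi_integrand lam kap mu t (G n) s)
      \<longlonglongrightarrow> (LBINT s:{0..t}. phi_integrand lam kap mu t f s)"
  proof (rule set_integral_tendsto_bounded_off_countable[OF countable_jumps[OF f]])
    show "set_borel_measurable lborel {0..t} (phi_integrand lam kap mu t (G n))" for n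
      by (rule set_borel_measurable_phi_integrand[OF G cont])
    show "set_borel_measurable lborel {0..t} (phi_integrand lam kap mu t f)"
      by (rule set_borel_measurable_phi_integrand[OF f cont])
    show "(\<lambda>n. phi_integrand lam kap mu t (G n) s) \<longlonglongrightarrow> phi_integrand lam kap mu t f s"
      if "s \<in> {0..t} - jumps f" for s
      unfolding phi_integrand_def using that
      by (intro tendsto_mult tendsto_exp tendsto_minus path cont tail) auto
    show "\<forall>\<^sub>F n in sequentially. \<forall>s\<in>{0..t}. \<bar>phi_integrand lam kap mu t (G n) s\<bar> \<le> B1"
      using B1
    proof eventually_elim
      case (elim n)
      show ?case
      proof
        fix s assume "s \<in> {0..t}"
        with elim have "\<bar>lam (G n s)\<bar> \<le> B1" by blast
        with abs_phi_integrand_le[OF nonneg] show "\<bar>phi_integrand lam kap mu t (G n) s\<bar> \<le> B1"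
          by (rule order_trans)
      qed
    qed
  qed
  then show ?thesis by (simp add: phi_t_eq_set_integral)
qed

lemma sequential_limit_imp_eps_delta:
  fixes F :: "'b \<Rightarrow> real" and D :: "'b \<Rightarrow> ereal"
  assumes seq: "\<And>G. (\<And>n. G n \<in> A) \<Longrightarrow> (\<And>d. d > 0 \<Longrightarrow> \<forall>\<^sub>F n in sequentially. D (G n) < ereal d) \<Longrightarrow>
      (\<lambda>n. F (G n)) \<longlonglongrightarrow> c"
  shows "\<forall>e>0. \<exists>d>0. \<forall>g\<in>A. D g < ereal d \<longrightarrow> \<bar>F g - c\<bar> < e"
proof (rule ccontr)
  assume "\<not> ?thesis"
  then obtain e where "e > 0" and "\<forall>n. \<exists>g. g \<in> A \<and> D g < ereal (inverse (Suc n)) \<and> \<not> \<bar>F g - c\<bar> < e"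
    by (metis inverse_positive_iff_positive of_nat_0_less_iff zero_less_Suc)
  then obtain G where G: "\<And>n. G n \<in> A" "\<And>n. D (G n) < ereal (inverse (Suc n))"
    "\<And>n. \<not> \<bar>F (G n) - c\<bar> < e"
    by metis
  have "\<forall>\<^sub>F n in sequentially. D (G n) < ereal d" if "d > 0" for d
    using order_tendstoD(2)[OF LIMSEQ_inverse_real_of_nat that]
  proof eventually_elim
    case (elim n)
    then have "ereal (inverse (real (Suc n))) < ereal d" by simp
    with G(2)[of n] show ?case by (rule less_trans)
  qed
  with G(1) have "(\<lambda>n. F (G n)) \<longlonglongrightarrow> c" by (rule seq)
  then have "\<forall>\<^sub>F n in sequentially. \<bar>F (G n) - c\<bar> < e"
    using \<open>e > 0\<close> by (auto simp: tendsto_iff dist_real_def)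
  with G(3) show False by auto
qed

theorem lemma8:
  fixes lam kap mu :: "'a::metric_space \<Rightarrow> real" and t :: real
  assumes "continuous_on UNIV lam" "continuous_on UNIV kap" "continuous_on UNIV mu"
    and "\<And>x. lam x \<ge> 0" "\<And>x. kap x \<ge> 0" "\<And>x. mu x \<ge> 0"
    and "t \<ge> 0"
  shows "\<forall>f\<in>Skorokhod_D. \<forall>e>0. \<exists>d>0. \<forall>g\<in>Skorokhod_D.
           skorokhod_dist f g < ereal d \<longrightarrow> \<bar>phi_t lam kap mu t g - phi_t lam kap mu t f\<bar> < e"
proof
  fix f :: "real \<Rightarrow> 'a" assume "f \<in> Skorokhod_D"
  then have f: "cadlag f" by (simp add: Skorokhod_D_def)
  show "\<forall>e>0. \<exists>d>0. \<forall>g\<in>Skorokhod_D.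
      skorokhod_dist f g < ereal d \<longrightarrow> \<bar>phi_t lam kap mu t g - phi_t lam kap mu t f\<bar> < e"
  proof (rule sequential_limit_imp_eps_delta)
    fix G assume "\<And>n. G n \<in> Skorokhod_D"
      and "\<And>d. d > 0 \<Longrightarrow> \<forall>\<^sub>F n in sequentially. skorokhod_dist f (G n) < ereal d"
    then show "(\<lambda>n. phi_t lam kap mu t (G n)) \<longlonglongrightarrow> phi_t lam kap mu t f"
      using phi_t_tendsto[OF f _ assms(1-3,5,6) skorokhod_dist_tendsto_imp_graph_convergent[OF assms(7)]]
      by (simp add: Skorokhod_D_def)
  qed
qed

end
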